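(* Let $n$ be a positive multiple of $4$, $\gamma\in\mathbb{R}$, $|\chi(\gamma)\rangle=\left(\cos(\gamma/4)|0\rangle^{\otimes4}+\sin(\gamma/4)|1\rangle^{\otimes 4}\right)^{\otimes n/4}$ and $\rho_\gamma=|\chi(\gamma)\rangle\langle\chi(\gamma)|$. Define $N_0=1$, $N_2(\gamma)=N_6(\gamma)=4\cos^2(\gamma/2)$, $N_4(\gamma)=6+8\sin^2(\gamma/2)$, $N_8=1$. Then for $\alpha\in\{0,\dots,2n\}$, $$\mathcal{P}_\alpha(\rho_\gamma)=\frac{1}{2^n}\sum_{\substack{i_0,i_2,i_4,i_6,i_8\ge0\\ i_0+i_2+i_4+i_6+i_8=n/4\\ 2i_2+4i_4+6i_6+8i_8=\alpha}}\frac{(n/4)!}{i_0!\,i_2!\,i_4!\,i_6!\,i_8!}\,N_2(\gamma)^{i_2}N_4(\gamma)^{i_4}N_6(\gamma)^{i_6}N_8^{i_8}.$$ In particular $\mathcal{P}_\alpha(\rho_\gamma)=0$ for odd $\alpha$.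
   Context: On $\mathcal{H}=(\mathbb{C}^2)^{\otimes n}$ define the Majorana operators $c_{2j-1}=Z^{\otimes(j-1)}\otimes X\otimes\mathbb{1}^{\otimes(n-j)}$ and $c_{2j}=Z^{\otimes(j-1)}\otimes Y\otimes\mathbb{1}^{\otimes(n-j)}$ for $j=1,\dots,n$. For $\alpha=0,\dots,2n$, $\mathcal{L}_\alpha\subseteq\mathcal{L}(\mathcal{H})$ is the span of the products $c_{i_1}\cdots c_{i_\alpha}$ with $1\le i_1<\dots<i_\alpha\le 2n$. The orthonormal basis used consists of the Hermitian Pauli strings (up to sign) in $\mathcal{L}_\alpha$ divided by $\sqrt{2^n}$, and $\mathcal{P}_\alpha(\rho)=\sum_\mu\mathrm{Tr}[B^\mu\rho]^2$ over this basis. *)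

theory Defs
  imports Complex_Main
begin

text \<open>Operators on (C^2)^{tensor n} are represented by their matrix entries
  in the computational basis, indexed by bitstrings (bool lists of length n;
  list position q is qubit q+1, True = |1>).\<close>

type_synonym op = "bool list \<Rightarrow> bool list \<Rightarrow> complex"

definition bitstrings :: "nat \<Rightarrow> bool list set" where
  "bitstrings n = {xs. length xs = n}"

text \<open>Single-qubit Paulis: 0 = identity, 1 = X, 2 = Y, 3 = Z.\<close>
definition sigma :: "nat \<Rightarrow> bool \<Rightarrow> bool \<Rightarrow> complex" where
  "sigma k a b =
     (if k = 0 then (if a = b then 1 else 0)
      else if k = 1 then (if a = b then 0 else 1)
      else if k = 2 then (if a = b then 0 else if a then \<i> else - \<i>)
      else (if a = b then (if a then -1 else 1) else 0))"

definition opmul :: "nat \<Rightarrow> op \<Rightarrow> op \<Rightarrow> op" where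
  "opmul n A B = (\<lambda>x y. \<Sum>z\<in>bitstrings n. A x z * B z y)"

definition opid :: op where
  "opid = (\<lambda>x y. if x = y then 1 else 0)"

definition trace :: "nat \<Rightarrow> op \<Rightarrow> complex" where
  "trace n A = (\<Sum>x\<in>bitstrings n. A x x)"

text \<open>Majorana operator c_m, m = 1..2n:
  c_{2j-1} = Z^{j-1} X 1^{n-j}, c_{2j} = Z^{j-1} Y 1^{n-j}.\<close>
definition majorana :: "nat \<Rightarrow> nat \<Rightarrow> op" where
  "majorana n m = (\<lambda>x y. \<Prod>q<n.
     sigma (if q < (m - 1) div 2 then 3
            else if q = (m - 1) div 2 then (if odd m then 1 else 2)
            else 0) (x ! q) (y ! q))"

definition mono :: "nat \<Rightarrow> nat set \<Rightarrow> op" where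
  "mono n S = foldr (opmul n) (map (majorana n) (sorted_list_of_set S)) opid"

definition in_L :: "nat \<Rightarrow> nat \<Rightarrow> op \<Rightarrow> bool" where
  "in_L n \<alpha> A \<longleftrightarrow> (\<exists>c :: nat set \<Rightarrow> complex.
     \<forall>x\<in>bitstrings n. \<forall>y\<in>bitstrings n.
       A x y = (\<Sum>S\<in>{S. S \<subseteq> {1..2*n} \<and> card S = \<alpha>}. c S * mono n S x y))"

definition pauli_strings :: "nat \<Rightarrow> nat list set" where
  "pauli_strings n = {p. length p = n \<and> set p \<subseteq> {0..<4}}"

definition pauli_op :: "nat \<Rightarrow> nat list \<Rightarrow> op" where
  "pauli_op n p = (\<lambda>x y. \<Prod>q<n. sigma (p ! q) (x ! q) (y ! q))"

text \<open>P_alpha(rho) = sum over the basis B = P / sqrt(2^n), P a Hermitian Pauli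
  string in L_alpha, of Tr[B rho]^2.\<close>
definition P_alpha :: "nat \<Rightarrow> nat \<Rightarrow> op \<Rightarrow> complex" where
  "P_alpha n \<alpha> \<rho> = (\<Sum>p\<in>{p\<in>pauli_strings n. in_L n \<alpha> (pauli_op n p)}.
     (trace n (opmul n (\<lambda>x y. pauli_op n p x y / complex_of_real (sqrt (2 ^ n))) \<rho>)) ^ 2)"

definition chi :: "nat \<Rightarrow> real \<Rightarrow> bool list \<Rightarrow> complex" where
  "chi n \<gamma> x = (\<Prod>b<n div 4.
     if (\<forall>k<4. \<not> x ! (4*b+k)) then complex_of_real (cos (\<gamma>/4))
     else if (\<forall>k<4. x ! (4*b+k)) then complex_of_real (sin (\<gamma>/4))
     else 0)"

definition rho_gamma :: "nat \<Rightarrow> real \<Rightarrow> op" where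
  "rho_gamma n \<gamma> = (\<lambda>x y. chi n \<gamma> x * cnj (chi n \<gamma> y))"

definition N2 :: "real \<Rightarrow> real" where "N2 \<gamma> = 4 * (cos (\<gamma>/2))^2"
definition N4 :: "real \<Rightarrow> real" where "N4 \<gamma> = 6 + 8 * (sin (\<gamma>/2))^2"
definition N6 :: "real \<Rightarrow> real" where "N6 \<gamma> = 4 * (cos (\<gamma>/2))^2"
definition N8 :: real where "N8 = 1"

end

theory Submission
  imports Defs "HOL-Computational_Algebra.Polynomial"
begin

text \<open>Every Majorana monomial is a nonzero multiple of a Pauli string, and by the Jordan-Wigner
  correspondence each Pauli string p is proportional to exactly one monomial, whose degree is
  jw_degree p. Hence the Pauli strings in L_alpha are those of degree alpha, and
  2^n P_alpha(rho_gamma) is the coefficient of t^alpha in the polynomial summing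
  <chi|p|chi>^2 t^(jw_degree p) over all Pauli strings p. The state chi is a product of
  four-qubit blocks cos(gamma/4)|0000> + sin(gamma/4)|1111>, so <chi|p|chi> factorises over
  the blocks; it vanishes unless every block of p has an even number of X/Y factors, and then
  the degree is additive over the blocks. The polynomial is therefore the (n/4)-th power of the
  one-block polynomial 1 + N2 t^2 + N4 t^4 + N6 t^6 + N8 t^8, and the multinomial theorem
  gives the formula. Only even powers of t occur, whence the vanishing for odd alpha.\<close>

lemma finite_bitstrings [simp]: "finite (bitstrings n)"
  unfolding bitstrings_def by (rule finite_list_length)

lemma bitstrings_0: "bitstrings 0 = {[]}"
  by (auto simp: bitstrings_def)

lemma bitstrings_1: "bitstrings (Suc 0) = {[False], [True]}"
  by (auto simp: bitstrings_def length_Suc_conv)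

lemma bitstrings_add: "bitstrings (n + k) = (\<lambda>(x, y). x @ y) ` (bitstrings n \<times> bitstrings k)"
proof
  show "bitstrings (n + k) \<subseteq> (\<lambda>(x, y). x @ y) ` (bitstrings n \<times> bitstrings k)"
  proof
    fix z assume "z \<in> bitstrings (n + k)"
    then have "z = (\<lambda>(x, y). x @ y) (take n z, drop n z)"
      and "(take n z, drop n z) \<in> bitstrings n \<times> bitstrings k"
      by (auto simp: bitstrings_def)
    then show "z \<in> (\<lambda>(x, y). x @ y) ` (bitstrings n \<times> bitstrings k)" by blast
  qed
qed (auto simp: bitstrings_def)

lemma sum_bitstrings_add:
  "(\<Sum>z\<in>bitstrings (n + k). f z) = (\<Sum>x\<in>bitstrings n. \<Sum>y\<in>bitstrings k. f (x @ y))"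
proof -
  have "inj_on (\<lambda>(x, y). x @ y) (bitstrings n \<times> bitstrings k)"
    by (auto simp: inj_on_def bitstrings_def)
  then show ?thesis
    unfolding bitstrings_add by (simp add: sum.reindex sum.cartesian_product split_def)
qed

lemma sum_bitstrings_prod:
  fixes f :: "nat \<Rightarrow> bool \<Rightarrow> 'a::comm_semiring_1"
  shows "(\<Sum>x\<in>bitstrings n. \<Prod>q<n. f q (x ! q)) = (\<Prod>q<n. f q False + f q True)"
proof (induction n)
  case 0
  then show ?case by (simp add: bitstrings_0)
next
  case (Suc n)
  have "(\<Sum>x\<in>bitstrings (Suc n). \<Prod>q<Suc n. f q (x ! q))
      = (\<Sum>x\<in>bitstrings n. \<Sum>y\<in>bitstrings 1. \<Prod>q<Suc n. f q ((x @ y) ! q))"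
    using sum_bitstrings_add[of _ n 1] by simp
  also have "\<dots> = (\<Sum>x\<in>bitstrings n. (\<Prod>q<n. f q (x ! q)) * (f n False + f n True))"
  proof (rule sum.cong)
    fix x assume "x \<in> bitstrings n"
    then have "length x = n" by (simp add: bitstrings_def)
    then have "(\<Prod>q<n. f q ((x @ [b]) ! q)) = (\<Prod>q<n. f q (x ! q))" for b
      by (intro prod.cong) (auto simp: nth_append)
    with \<open>length x = n\<close> show "(\<Sum>y\<in>bitstrings 1. \<Prod>q<Suc n. f q ((x @ y) ! q))
        = (\<Prod>q<n. f q (x ! q)) * (f n False + f n True)"
      by (simp add: bitstrings_1 distrib_left nth_append)
  qed simp
  also have "\<dots> = (\<Prod>q<Suc n. f q False + f q True)"
    by (simp add: Suc sum_distrib_right[symmetric])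
  finally show ?case .
qed

lemma sum_sum_bitstrings_prod:
  fixes f :: "nat \<Rightarrow> bool \<Rightarrow> bool \<Rightarrow> 'a::comm_semiring_1"
  shows "(\<Sum>x\<in>bitstrings n. \<Sum>y\<in>bitstrings n. \<Prod>q<n. f q (x ! q) (y ! q))
       = (\<Prod>q<n. f q False False + f q False True + f q True False + f q True True)"
proof -
  have "(\<Sum>x\<in>bitstrings n. \<Sum>y\<in>bitstrings n. \<Prod>q<n. f q (x ! q) (y ! q))
      = (\<Sum>x\<in>bitstrings n. \<Prod>q<n. f q (x ! q) False + f q (x ! q) True)"
    by (intro sum.cong) (auto simp: sum_bitstrings_prod[of "\<lambda>q b. f q (x ! q) b" for x])
  also have "\<dots> = (\<Prod>q<n. f q False False + f q False True + (f q True False + f q True True))"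
    by (simp add: sum_bitstrings_prod[of "\<lambda>q a. f q a False + f q a True"])
  finally show ?thesis by (simp add: add.assoc)
qed

lemma sum_lessThan_add: "(\<Sum>q<n + (k::nat). f q) = (\<Sum>q<n. f q) + (\<Sum>j<k. f (n + j))"
  by (induction k) (auto simp: add.assoc)

lemma prod_lessThan_add: "(\<Prod>q<n + (k::nat). f q) = (\<Prod>q<n. f q) * (\<Prod>j<k. f (n + j))"
  by (induction k) (auto simp: mult.assoc)

lemma less_4_cases: "(a::nat) < 4 \<Longrightarrow> a = 0 \<or> a = 1 \<or> a = 2 \<or> a = 3"
  by auto

lemma all_less_4: "(\<forall>k<4::nat. P k) \<longleftrightarrow> P 0 \<and> P 1 \<and> P 2 \<and> P 3"
  by (auto simp: less_Suc_eq numeral_eq_Suc)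

lemma sum_lessThan_4: "(\<Sum>k<(4::nat). f k) = f 0 + f 1 + f 2 + (f 3 :: 'a::comm_monoid_add)"
  by (simp add: numeral_eq_Suc add_ac)

lemma prod_lessThan_4: "(\<Prod>k<(4::nat). f k) = f 0 * f 1 * f 2 * (f 3 :: 'a::comm_monoid_mult)"
  by (simp add: numeral_eq_Suc mult_ac)

text \<open>Symplectic coordinates: sigma a is proportional to X^(pauli_x a) Z^(pauli_z a).\<close>

definition pauli_x :: "nat \<Rightarrow> bool" where
  "pauli_x a \<longleftrightarrow> a = 1 \<or> a = 2"

definition pauli_z :: "nat \<Rightarrow> bool" where
  "pauli_z a \<longleftrightarrow> 2 \<le> a"

definition pauli_of_xz :: "bool \<Rightarrow> bool \<Rightarrow> nat" where
  "pauli_of_xz x z = (if x then (if z then 2 else 1) else (if z then 3 else 0))"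

definition pauli_mult :: "nat \<Rightarrow> nat \<Rightarrow> nat" where
  "pauli_mult a b = pauli_of_xz (pauli_x a \<noteq> pauli_x b) (pauli_z a \<noteq> pauli_z b)"

definition pauli_phase :: "nat \<Rightarrow> nat \<Rightarrow> complex" where
  "pauli_phase a b =
     (if (a, b) \<in> {(1, 2), (2, 3), (3, 1)} then \<i>
      else if (a, b) \<in> {(2, 1), (3, 2), (1, 3)} then - \<i> else 1)"

lemma pauli_x_of_xz [simp]: "pauli_x (pauli_of_xz x z) = x"
  and pauli_z_of_xz [simp]: "pauli_z (pauli_of_xz x z) = z"
  and pauli_of_xz_less [simp]: "pauli_of_xz x z < 4"
  by (auto simp: pauli_x_def pauli_z_def pauli_of_xz_def)

lemma pauli_of_xz_xz: "a < 4 \<Longrightarrow> pauli_of_xz (pauli_x a) (pauli_z a) = a"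
  by (auto simp: pauli_x_def pauli_z_def pauli_of_xz_def)

lemma pauli_eqI:
  assumes "a < 4" "b < 4" "pauli_x a = pauli_x b" "pauli_z a = pauli_z b"
  shows "a = b"
proof -
  have "a = pauli_of_xz (pauli_x a) (pauli_z a)"
    using pauli_of_xz_xz[OF assms(1)] by (rule sym)
  also have "\<dots> = b"
    using pauli_of_xz_xz[OF assms(2)] assms(3,4) by simp
  finally show ?thesis .
qed

lemma pauli_phase_nonzero: "pauli_phase a b \<noteq> 0"
  by (auto simp: pauli_phase_def)

lemma sigma_mult:
  assumes "a < 4" "b < 4"
  shows "sigma a x False * sigma b False y + sigma a x True * sigma b True y
       = pauli_phase a b * sigma (pauli_mult a b) x y"
  using less_4_cases[OF assms(1)] less_4_cases[OF assms(2)]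
  by (elim disjE; cases x; cases y;
      simp add: sigma_def pauli_phase_def pauli_mult_def pauli_of_xz_def pauli_x_def pauli_z_def)

lemma sigma_orthogonal:
  assumes "a < 4" "b < 4"
  shows "cnj (sigma a False False) * sigma b False False + cnj (sigma a False True) * sigma b False True
       + cnj (sigma a True False) * sigma b True False + cnj (sigma a True True) * sigma b True True
       = (if a = b then 2 else 0)"
  using less_4_cases[OF assms(1)] less_4_cases[OF assms(2)] by (elim disjE; simp add: sigma_def)

lemma sigma_diagonal_eq_0: "pauli_x a \<Longrightarrow> sigma a u u = 0"
  by (auto simp: pauli_x_def sigma_def)

lemma sigma_off_diagonal_eq_0: "a < 4 \<Longrightarrow> \<not> pauli_x a \<Longrightarrow> u \<noteq> v \<Longrightarrow> sigma a u v = 0"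
  using less_4_cases[of a] by (auto simp: pauli_x_def sigma_def)

definition pauli_fun :: "nat \<Rightarrow> (nat \<Rightarrow> nat) \<Rightarrow> op" where
  "pauli_fun n f = (\<lambda>x y. \<Prod>q<n. sigma (f q) (x ! q) (y ! q))"

lemma pauli_op_eq_pauli_fun: "pauli_op n p = pauli_fun n ((!) p)"
  by (simp add: pauli_op_def pauli_fun_def)

lemma opmul_pauli_fun:
  assumes "\<forall>q<n. f q < 4 \<and> g q < 4"
  shows "opmul n (pauli_fun n f) (\<lambda>x y. c * pauli_fun n g x y) x y
       = c * (\<Prod>q<n. pauli_phase (f q) (g q)) * pauli_fun n (\<lambda>q. pauli_mult (f q) (g q)) x y"
proof -
  have "opmul n (pauli_fun n f) (\<lambda>x y. c * pauli_fun n g x y) x y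
      = c * (\<Sum>z\<in>bitstrings n. \<Prod>q<n. sigma (f q) (x ! q) (z ! q) * sigma (g q) (z ! q) (y ! q))"
    by (simp add: opmul_def pauli_fun_def prod.distrib sum_distrib_left mult_ac)
  also have "\<dots> = c * (\<Prod>q<n. pauli_phase (f q) (g q) * sigma (pauli_mult (f q) (g q)) (x ! q) (y ! q))"
    by (simp add: sum_bitstrings_prod[of "\<lambda>q b. sigma (f q) (x ! q) b * sigma (g q) b (y ! q)"]
        sigma_mult assms)
  finally show ?thesis by (simp add: prod.distrib pauli_fun_def mult_ac)
qed

definition hs_inner :: "nat \<Rightarrow> op \<Rightarrow> op \<Rightarrow> complex" where
  "hs_inner n A B = (\<Sum>x\<in>bitstrings n. \<Sum>y\<in>bitstrings n. cnj (A x y) * B x y)"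

lemma hs_inner_sum_right:
  assumes "finite I" "\<forall>x\<in>bitstrings n. \<forall>y\<in>bitstrings n. B x y = (\<Sum>i\<in>I. c i * B' i x y)"
  shows "hs_inner n A B = (\<Sum>i\<in>I. c i * hs_inner n A (B' i))"
proof -
  have "hs_inner n A B
      = (\<Sum>x\<in>bitstrings n. \<Sum>y\<in>bitstrings n. \<Sum>i\<in>I. c i * (cnj (A x y) * B' i x y))"
    using assms(2) by (simp add: hs_inner_def sum_distrib_left mult_ac)
  also have "\<dots> = (\<Sum>i\<in>I. c i * hs_inner n A (B' i))"
    by (simp add: hs_inner_def sum_distrib_left sum.swap[of _ I])
  finally show ?thesis .
qed

lemma hs_inner_pauli_fun:
  assumes "\<forall>q<n. f q < 4 \<and> g q < 4"
  shows "hs_inner n (pauli_fun n f) (pauli_fun n g) = (if \<forall>q<n. f q = g q then 2 ^ n else 0)"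
proof -
  have "hs_inner n (pauli_fun n f) (pauli_fun n g)
      = (\<Sum>x\<in>bitstrings n. \<Sum>y\<in>bitstrings n.
           \<Prod>q<n. cnj (sigma (f q) (x ! q) (y ! q)) * sigma (g q) (x ! q) (y ! q))"
    by (simp add: hs_inner_def pauli_fun_def prod.distrib)
  also have "\<dots> = (\<Prod>q<n. if f q = g q then 2 else 0)"
    by (simp add: sum_sum_bitstrings_prod[of "\<lambda>q a b. cnj (sigma (f q) a b) * sigma (g q) a b"]
        sigma_orthogonal assms)
  also have "\<dots> = (if \<forall>q<n. f q = g q then 2 ^ n else 0)"
    by auto
  finally show ?thesis .
qed

lemma pauli_fun_cong: "(\<And>q. q < n \<Longrightarrow> f q = g q) \<Longrightarrow> pauli_fun n f = pauli_fun n g"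
  unfolding pauli_fun_def by (intro ext prod.cong) auto

lemma opid_eq_pauli_fun:
  assumes "x \<in> bitstrings n" "y \<in> bitstrings n"
  shows "opid x y = pauli_fun n (\<lambda>q. 0) x y"
proof (cases "x = y")
  case True
  then show ?thesis by (simp add: opid_def pauli_fun_def sigma_def)
next
  case False
  then obtain q where "q < n" "x ! q \<noteq> y ! q"
    using assms nth_equalityI[of x y] by (auto simp: bitstrings_def)
  then show ?thesis using False by (auto simp: opid_def pauli_fun_def sigma_def intro!: prod_zero)
qed

lemma pauli_strings_0: "pauli_strings 0 = {[]}"
  by (auto simp: pauli_strings_def)

lemma pauli_strings_Suc: "pauli_strings (Suc n) = (\<lambda>(a, p). a # p) ` ({..<4} \<times> pauli_strings n)"
proof
  show "pauli_strings (Suc n) \<subseteq> (\<lambda>(a, p). a # p) ` ({..<4} \<times> pauli_strings n)"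
  proof
    fix z assume z: "z \<in> pauli_strings (Suc n)"
    then obtain a p where "z = a # p"
      by (cases z) (auto simp: pauli_strings_def)
    with z show "z \<in> (\<lambda>(a, p). a # p) ` ({..<4} \<times> pauli_strings n)"
      by (auto simp: pauli_strings_def image_iff)
  qed
qed (auto simp: pauli_strings_def)

lemma finite_pauli_strings [simp]: "finite (pauli_strings n)"
  by (induction n) (auto simp: pauli_strings_0 pauli_strings_Suc)

lemma sum_pauli_strings_Suc:
  "(\<Sum>p\<in>pauli_strings (Suc n). f p) = (\<Sum>a<4. \<Sum>p\<in>pauli_strings n. f (a # p))"
proof -
  have "inj_on (\<lambda>(a, p). a # p) ({..<4} \<times> pauli_strings n)"
    by (auto simp: inj_on_def)
  then show ?thesis
    unfolding pauli_strings_Suc by (simp add: sum.reindex sum.cartesian_product split_def)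
qed

lemma sum_pauli_strings_4:
  "(\<Sum>p\<in>pauli_strings 4. f p) = (\<Sum>a<4. \<Sum>b<4. \<Sum>c<4. \<Sum>d<4. f [a, b, c, d])"
  by (simp add: numeral_eq_Suc sum_pauli_strings_Suc pauli_strings_0)

lemma pauli_strings_add:
  "pauli_strings (n + k) = (\<lambda>(p, p'). p @ p') ` (pauli_strings n \<times> pauli_strings k)"
proof
  show "pauli_strings (n + k) \<subseteq> (\<lambda>(p, p'). p @ p') ` (pauli_strings n \<times> pauli_strings k)"
  proof
    fix z assume "z \<in> pauli_strings (n + k)"
    then have "z = (\<lambda>(p, p'). p @ p') (take n z, drop n z)"
      and "(take n z, drop n z) \<in> pauli_strings n \<times> pauli_strings k"
      by (auto simp: pauli_strings_def dest: in_set_takeD in_set_dropD)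
    then show "z \<in> (\<lambda>(p, p'). p @ p') ` (pauli_strings n \<times> pauli_strings k)" by blast
  qed
qed (auto simp: pauli_strings_def subset_iff)

lemma sum_pauli_strings_add:
  "(\<Sum>z\<in>pauli_strings (n + k). f z) = (\<Sum>p\<in>pauli_strings n. \<Sum>p'\<in>pauli_strings k. f (p @ p'))"
proof -
  have "inj_on (\<lambda>(p, p'). p @ p') (pauli_strings n \<times> pauli_strings k)"
    by (auto simp: inj_on_def pauli_strings_def)
  then show ?thesis
    unfolding pauli_strings_add by (simp add: sum.reindex sum.cartesian_product split_def)
qed

lemma pauli_strings_length: "p \<in> pauli_strings n \<Longrightarrow> length p = n"
  by (simp add: pauli_strings_def)

lemma pauli_strings_nth_less: "p \<in> pauli_strings n \<Longrightarrow> q < n \<Longrightarrow> p ! q < 4"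
  by (auto simp: pauli_strings_def dest: nth_mem)

section \<open>Majorana monomials as Pauli strings\<close>

definition majorana_pauli :: "nat \<Rightarrow> nat \<Rightarrow> nat" where
  "majorana_pauli m q =
     (if q < (m - 1) div 2 then 3 else if q = (m - 1) div 2 then (if odd m then 1 else 2) else 0)"

lemma majorana_pauli_less [simp]: "majorana_pauli m q < 4"
  by (simp add: majorana_pauli_def)

lemma majorana_eq_pauli_fun: "majorana n m = pauli_fun n (majorana_pauli m)"
  by (simp add: majorana_def pauli_fun_def majorana_pauli_def)

lemma pauli_x_majorana_pauli:
  "0 < m \<Longrightarrow> pauli_x (majorana_pauli m q) \<longleftrightarrow> m = 2 * q + 1 \<or> m = 2 * q + 2"
  by (auto simp: majorana_pauli_def pauli_x_def)

lemma pauli_z_majorana_pauli: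
  "0 < m \<Longrightarrow> pauli_z (majorana_pauli m q) \<longleftrightarrow> 2 * q + 2 \<le> m"
  by (auto simp: majorana_pauli_def pauli_z_def)

definition monomial_pauli :: "nat set \<Rightarrow> nat \<Rightarrow> nat" where
  "monomial_pauli S q = pauli_of_xz
     (odd (card {m\<in>S. pauli_x (majorana_pauli m q)})) (odd (card {m\<in>S. pauli_z (majorana_pauli m q)}))"

lemma monomial_pauli_less [simp]: "monomial_pauli S q < 4"
  by (simp add: monomial_pauli_def)

lemma foldr_majorana_eq_scaled_pauli:
  "\<exists>c. c \<noteq> 0 \<and> (\<forall>x\<in>bitstrings n. \<forall>y\<in>bitstrings n.
      foldr (opmul n) (map (majorana n) L) opid x y = c * pauli_fun n (\<lambda>q. pauli_of_xz
        (odd (length (filter (\<lambda>m. pauli_x (majorana_pauli m q)) L)))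
        (odd (length (filter (\<lambda>m. pauli_z (majorana_pauli m q)) L)))) x y)"
proof (induction L)
  case Nil
  show ?case
    by (intro exI[of _ 1]) (auto simp: opid_eq_pauli_fun pauli_of_xz_def)
next
  case (Cons m L)
  let ?P = "\<lambda>L q. pauli_of_xz (odd (length (filter (\<lambda>m. pauli_x (majorana_pauli m q)) L)))
                              (odd (length (filter (\<lambda>m. pauli_z (majorana_pauli m q)) L)))"
  from Cons.IH obtain c where "c \<noteq> 0" and IH: "\<forall>x\<in>bitstrings n. \<forall>y\<in>bitstrings n.
      foldr (opmul n) (map (majorana n) L) opid x y = c * pauli_fun n (?P L) x y"
    by blast
  have mult: "pauli_mult (majorana_pauli m q) (?P L q) = ?P (m # L) q" for q
    by (simp add: pauli_mult_def)
  define c' where "c' = c * (\<Prod>q<n. pauli_phase (majorana_pauli m q) (?P L q))"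
  have "c' \<noteq> 0"
    using \<open>c \<noteq> 0\<close> by (simp add: c'_def pauli_phase_nonzero)
  moreover have "foldr (opmul n) (map (majorana n) (m # L)) opid x y = c' * pauli_fun n (?P (m # L)) x y"
    if "y \<in> bitstrings n" for x y
  proof -
    have "foldr (opmul n) (map (majorana n) (m # L)) opid x y
        = opmul n (pauli_fun n (majorana_pauli m)) (\<lambda>x y. c * pauli_fun n (?P L) x y) x y"
      using IH that by (simp add: opmul_def majorana_eq_pauli_fun)
    also have "\<dots> = c' * pauli_fun n (?P (m # L)) x y"
      by (simp add: opmul_pauli_fun mult c'_def)
    finally show ?thesis .
  qed
  ultimately show ?case by blast
qed

lemma mono_eq_scaled_pauli:
  assumes "finite S"
  shows "\<exists>c. c \<noteq> 0 \<and> (\<forall>x\<in>bitstrings n. \<forall>y\<in>bitstrings n.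
           mono n S x y = c * pauli_fun n (monomial_pauli S) x y)"
proof -
  have "(\<lambda>q. pauli_of_xz
          (odd (length (filter (\<lambda>m. pauli_x (majorana_pauli m q)) (sorted_list_of_set S))))
          (odd (length (filter (\<lambda>m. pauli_z (majorana_pauli m q)) (sorted_list_of_set S)))))
      = monomial_pauli S"
    using assms by (auto simp: monomial_pauli_def distinct_length_filter Int_def conj_commute)
  then show ?thesis
    using foldr_majorana_eq_scaled_pauli[of n "sorted_list_of_set S"] by (simp add: mono_def)
qed

lemma pauli_x_monomial_pauli:
  assumes "finite S" "0 \<notin> S"
  shows "pauli_x (monomial_pauli S q) \<longleftrightarrow> (2 * q + 1 \<in> S \<longleftrightarrow> 2 * q + 2 \<notin> S)"
proof -
  have pos: "m \<in> S \<Longrightarrow> 0 < m" for m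
    using assms(2) by (cases m) auto
  have "{m\<in>S. pauli_x (majorana_pauli m q)} = S \<inter> {2 * q + 1, 2 * q + 2}"
    by (auto simp: pauli_x_majorana_pauli pos)
  then show ?thesis
    using assms(1) by (auto simp: monomial_pauli_def Int_insert_right)
qed

lemma pauli_z_monomial_pauli:
  assumes "finite S" "0 \<notin> S"
  shows "pauli_z (monomial_pauli S q) \<longleftrightarrow> (2 * q + 2 \<in> S \<longleftrightarrow> even (card {m\<in>S. 2 * q + 2 < m}))"
proof -
  have pos: "m \<in> S \<Longrightarrow> 0 < m" for m
    using assms(2) by (cases m) auto
  have "{m\<in>S. pauli_z (majorana_pauli m q)} = S \<inter> {2 * q + 2} \<union> {m\<in>S. 2 * q + 2 < m}"
    by (auto simp: pauli_z_majorana_pauli pos)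
  moreover have "card (S \<inter> {2 * q + 2} \<union> {m\<in>S. 2 * q + 2 < m})
      = card (S \<inter> {2 * q + 2}) + card {m\<in>S. 2 * q + 2 < m}"
    using assms(1) by (intro card_Un_disjoint) auto
  ultimately show ?thesis
    by (auto simp: monomial_pauli_def Int_insert_right)
qed

section \<open>The Jordan-Wigner degree\<close>

definition jw_tail_parity :: "nat list \<Rightarrow> nat \<Rightarrow> bool" where
  "jw_tail_parity p q \<longleftrightarrow> odd (\<Sum>q'<length p. of_bool (q < q' \<and> pauli_x (p ! q')) :: nat)"

text \<open>If p is proportional to a Majorana monomial, then b1 and b2 record whether c(2q+1) and
  c(2q+2) occur in it: its X-part on qubit q is b1 xor b2, and its Z-part is b2 xor the parity
  of the Majoranas on later qubits, which is the tail parity of the X-parts.\<close>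

definition jw_degree :: "nat list \<Rightarrow> nat" where
  "jw_degree p = (\<Sum>q<length p.
     let b2 = (pauli_z (p ! q) \<noteq> jw_tail_parity p q); b1 = (pauli_x (p ! q) \<noteq> b2)
     in of_bool b1 + of_bool b2)"

lemma sum_atLeastAtMost_pairs: "sum h {1..2 * (n::nat)} = (\<Sum>q<n. h (2 * q + 1) + h (2 * q + 2))"
proof (induction n)
  case (Suc n)
  have "{1..2 * Suc n} = insert (2 * n + 2) (insert (2 * n + 1) {1..2 * n})" by auto
  then show ?case using Suc by (simp add: add_ac)
qed simp

lemma card_filter_eq_sum_pairs:
  fixes S :: "nat set"
  assumes "S \<subseteq> {1..2 * n}"
  shows "card {m\<in>S. P m}
       = (\<Sum>q<n. of_bool (2 * q + 1 \<in> S \<and> P (2 * q + 1)) + of_bool (2 * q + 2 \<in> S \<and> P (2 * q + 2)))"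
proof -
  have "card {m\<in>S. P m} = card ({1..2 * n} \<inter> {m. m \<in> S \<and> P m})"
    using assms by (intro arg_cong[where f = card]) auto
  also have "\<dots> = (\<Sum>m\<in>{1..2 * n}. of_bool (m \<in> S \<and> P m))"
    by simp
  finally show ?thesis by (simp only: sum_atLeastAtMost_pairs)
qed

lemma odd_sum_cong:
  fixes f g :: "'a \<Rightarrow> nat"
  assumes "\<And>i. i \<in> A \<Longrightarrow> f i mod 2 = g i mod 2"
  shows "odd (sum f A) \<longleftrightarrow> odd (sum g A)"
proof -
  have "sum f A mod 2 = (\<Sum>i\<in>A. f i mod 2) mod 2" by (simp add: mod_sum_eq)
  also have "\<dots> = (\<Sum>i\<in>A. g i mod 2) mod 2"
    using assms by simp
  also have "\<dots> = sum g A mod 2" by (simp add: mod_sum_eq)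
  finally show ?thesis by (simp add: odd_iff_mod_2_eq_one)
qed

lemma jw_tail_parity_eq_card:
  assumes S: "S \<subseteq> {1..2 * n}" and "length p = n"
    and x: "\<forall>q<n. pauli_x (p ! q) \<longleftrightarrow> pauli_x (monomial_pauli S q)"
  shows "jw_tail_parity p q \<longleftrightarrow> odd (card {m\<in>S. 2 * q + 2 < m})"
proof -
  have "finite S" "0 \<notin> S"
    using S finite_subset by auto
  then show ?thesis
    unfolding jw_tail_parity_def card_filter_eq_sum_pairs[OF S] \<open>length p = n\<close>
    by (intro odd_sum_cong) (auto simp: x pauli_x_monomial_pauli)
qed

lemma card_eq_jw_degree:
  assumes S: "S \<subseteq> {1..2 * n}" and "length p = n"
    and p: "\<forall>q<n. p ! q = monomial_pauli S q"
  shows "card S = jw_degree p"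
proof -
  have "finite S" "0 \<notin> S"
    using S finite_subset by auto
  have "card S = card {m\<in>S. True}" by simp
  also have "\<dots> = (\<Sum>q<n. of_bool (2 * q + 1 \<in> S) + of_bool (2 * q + 2 \<in> S))"
    unfolding card_filter_eq_sum_pairs[OF S] by simp
  also have "\<dots> = jw_degree p"
    unfolding jw_degree_def \<open>length p = n\<close> Let_def
    using jw_tail_parity_eq_card[OF S \<open>length p = n\<close>] p
      pauli_x_monomial_pauli[OF \<open>finite S\<close> \<open>0 \<notin> S\<close>] pauli_z_monomial_pauli[OF \<open>finite S\<close> \<open>0 \<notin> S\<close>]
    by (intro sum.cong) auto
  finally show ?thesis .
qed

lemma exists_monomial_pauli_eq:
  assumes "length p = n" and p: "\<forall>q<n. p ! q < 4"
  shows "\<exists>S \<subseteq> {1..2 * n}. \<forall>q<n. monomial_pauli S q = p ! q"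
proof -
  define b2 where "b2 q \<longleftrightarrow> pauli_z (p ! q) \<noteq> jw_tail_parity p q" for q
  define b1 where "b1 q \<longleftrightarrow> pauli_x (p ! q) \<noteq> b2 q" for q
  define S where "S = {m\<in>{1..2 * n}. if odd m then b1 ((m - 1) div 2) else b2 ((m - 1) div 2)}"
  have S: "S \<subseteq> {1..2 * n}" "finite S" "0 \<notin> S"
    by (auto simp: S_def)
  have mem1: "2 * q + 1 \<in> S \<longleftrightarrow> b1 q" and mem2: "2 * q + 2 \<in> S \<longleftrightarrow> b2 q" if "q < n" for q
  proof -
    have "(2 * q + 2 - 1) div 2 = q" by presburger
    with that show "2 * q + 1 \<in> S \<longleftrightarrow> b1 q" "2 * q + 2 \<in> S \<longleftrightarrow> b2 q"
      by (auto simp: S_def)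
  qed
  have x: "\<forall>q<n. pauli_x (p ! q) \<longleftrightarrow> pauli_x (monomial_pauli S q)"
    using mem1 mem2 by (simp add: pauli_x_monomial_pauli[OF S(2,3)] b1_def) blast
  have "monomial_pauli S q = p ! q" if "q < n" for q
  proof (rule pauli_eqI)
    show "pauli_x (monomial_pauli S q) = pauli_x (p ! q)"
      using x that by simp
    show "pauli_z (monomial_pauli S q) = pauli_z (p ! q)"
      using mem2[OF that] jw_tail_parity_eq_card[OF S(1) assms(1) x, of q]
      by (simp add: pauli_z_monomial_pauli[OF S(2,3)] b2_def) blast
  qed (use p that in auto)
  with S(1) show ?thesis by blast
qed

lemma pauli_op_in_L:
  assumes p: "p \<in> pauli_strings n"
  shows "in_L n (jw_degree p) (pauli_op n p)"
proof -
  obtain S where S: "S \<subseteq> {1..2 * n}" and PS: "\<forall>q<n. monomial_pauli S q = p ! q"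
    using exists_monomial_pauli_eq[of p n] pauli_strings_length[OF p] pauli_strings_nth_less[OF p]
    by blast
  have "finite S"
    using S finite_subset by blast
  have "card S = jw_degree p"
    using card_eq_jw_degree[OF S pauli_strings_length[OF p]] PS by simp
  obtain c where "c \<noteq> 0"
    and mono: "\<forall>x\<in>bitstrings n. \<forall>y\<in>bitstrings n. mono n S x y = c * pauli_fun n (monomial_pauli S) x y"
    using mono_eq_scaled_pauli[OF \<open>finite S\<close>] by blast
  have "pauli_fun n (monomial_pauli S) = pauli_op n p"
    unfolding pauli_op_eq_pauli_fun using PS by (intro pauli_fun_cong) auto
  let ?A = "{S. S \<subseteq> {1..2 * n} \<and> card S = jw_degree p}"
  have "finite ?A"
    by (rule finite_subset[of _ "Pow {1..2 * n}"]) auto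
  have "pauli_op n p x y = (\<Sum>S'\<in>?A. (if S' = S then inverse c else 0) * mono n S' x y)"
    if "x \<in> bitstrings n" "y \<in> bitstrings n" for x y
  proof -
    have "(\<Sum>S'\<in>?A. (if S' = S then inverse c else 0) * mono n S' x y)
        = (\<Sum>S'\<in>?A. if S' = S then inverse c * mono n S x y else 0)"
      by (rule sum.cong) auto
    also have "\<dots> = inverse c * mono n S x y"
      using \<open>finite ?A\<close> S \<open>card S = jw_degree p\<close> by (simp add: sum.delta)
    also have "\<dots> = pauli_op n p x y"
      using mono that \<open>c \<noteq> 0\<close> \<open>pauli_fun n (monomial_pauli S) = pauli_op n p\<close> by simp
    finally show ?thesis by simp
  qed
  then show ?thesis
    unfolding in_L_def by (intro exI[of _ "\<lambda>S'. if S' = S then inverse c else 0"]) blast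
qed

lemma hs_inner_pauli_op_mono_eq_0:
  assumes p: "p \<in> pauli_strings n" and S: "S \<subseteq> {1..2 * n}" and "card S \<noteq> jw_degree p"
  shows "hs_inner n (pauli_op n p) (mono n S) = 0"
proof -
  have "finite S"
    using S finite_subset by blast
  then obtain c where mono: "\<forall>x\<in>bitstrings n. \<forall>y\<in>bitstrings n.
      mono n S x y = c * pauli_fun n (monomial_pauli S) x y"
    using mono_eq_scaled_pauli by blast
  have "hs_inner n (pauli_op n p) (mono n S)
      = c * hs_inner n (pauli_op n p) (pauli_fun n (monomial_pauli S))"
    unfolding hs_inner_def sum_distrib_left using mono by (intro sum.cong) (auto simp: mult_ac)
  moreover have "\<not> (\<forall>q<n. p ! q = monomial_pauli S q)"
    using card_eq_jw_degree[OF S pauli_strings_length[OF p]] \<open>card S \<noteq> jw_degree p\<close> by auto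
  ultimately show ?thesis
    using pauli_strings_nth_less[OF p] by (simp add: pauli_op_eq_pauli_fun hs_inner_pauli_fun)
qed

lemma jw_degree_eq_if_in_L:
  assumes p: "p \<in> pauli_strings n" and "in_L n \<alpha> (pauli_op n p)"
  shows "\<alpha> = jw_degree p"
proof (rule ccontr)
  assume "\<alpha> \<noteq> jw_degree p"
  let ?A = "{S. S \<subseteq> {1..2 * n} \<and> card S = \<alpha>}"
  have "finite ?A"
    by (rule finite_subset[of _ "Pow {1..2 * n}"]) auto
  obtain a where "\<forall>x\<in>bitstrings n. \<forall>y\<in>bitstrings n.
      pauli_op n p x y = (\<Sum>S\<in>?A. a S * mono n S x y)"
    using \<open>in_L n \<alpha> (pauli_op n p)\<close> unfolding in_L_def by blast
  then have "hs_inner n (pauli_op n p) (pauli_op n p) = (\<Sum>S\<in>?A. a S * hs_inner n (pauli_op n p) (mono n S))"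
    by (rule hs_inner_sum_right[OF \<open>finite ?A\<close>])
  also have "\<dots> = 0"
    using hs_inner_pauli_op_mono_eq_0[OF p] \<open>\<alpha> \<noteq> jw_degree p\<close> by (intro sum.neutral) auto
  finally show False
    using pauli_strings_nth_less[OF p] by (simp add: pauli_op_eq_pauli_fun hs_inner_pauli_fun)
qed

lemma in_L_pauli_op_iff:
  "p \<in> pauli_strings n \<Longrightarrow> in_L n \<alpha> (pauli_op n p) \<longleftrightarrow> \<alpha> = jw_degree p"
  using pauli_op_in_L jw_degree_eq_if_in_L by blast

section \<open>Expectation values in the block product state\<close>

definition chi_expectation :: "nat \<Rightarrow> real \<Rightarrow> nat list \<Rightarrow> complex" where
  "chi_expectation n \<gamma> p =
     (\<Sum>x\<in>bitstrings n. \<Sum>z\<in>bitstrings n. chi n \<gamma> x * pauli_op n p x z * chi n \<gamma> z)"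

lemma cnj_chi [simp]: "cnj (chi n \<gamma> x) = chi n \<gamma> x"
  by (simp add: chi_def if_distrib[of cnj] cong: if_cong)

lemma trace_pauli_op_rho_gamma:
  "trace n (opmul n (\<lambda>x y. pauli_op n p x y / c) (rho_gamma n \<gamma>)) = chi_expectation n \<gamma> p / c"
proof -
  have "pauli_op n p x z / c * (chi n \<gamma> z * cnj (chi n \<gamma> x))
      = chi n \<gamma> x * pauli_op n p x z * chi n \<gamma> z / c" for x z
    by (simp add: ac_simps)
  then show ?thesis
    unfolding trace_def opmul_def rho_gamma_def chi_expectation_def
    by (simp only: sum_divide_distrib)
qed

lemma chi_append:
  assumes x: "length x = 4 * m" and y: "length y = 4"
  shows "chi (4 * m + 4) \<gamma> (x @ y) = chi (4 * m) \<gamma> x * chi 4 \<gamma> y"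
proof -
  define block where "block x b =
    (if \<forall>k<4. \<not> x ! (4 * b + k) then complex_of_real (cos (\<gamma> / 4))
     else if \<forall>k<4. x ! (4 * b + k) then complex_of_real (sin (\<gamma> / 4)) else 0)" for x b
  have chi: "chi n \<gamma> x = (\<Prod>b<n div 4. block x b)" for n x
    unfolding chi_def block_def ..
  have "block (x @ y) b = block x b" if "b < m" for b
  proof -
    have "(x @ y) ! (4 * b + k) = x ! (4 * b + k)" if "k < 4" for k
      using \<open>b < m\<close> that x by (simp add: nth_append)
    then show ?thesis
      unfolding block_def by (simp cong: if_cong)
  qed
  moreover have "block (x @ y) m = block y 0"
  proof -
    have "(x @ y) ! (4 * m + k) = y ! (4 * 0 + k)" for k
      using x by (simp add: nth_append)
    then show ?thesis
      unfolding block_def by (simp only:)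
  qed
  ultimately show ?thesis
    unfolding chi by simp
qed

lemma pauli_op_append:
  assumes "length p = n" "length x = n" "length z = n" "length B = k" "length x' = k" "length z' = k"
  shows "pauli_op (n + k) (p @ B) (x @ x') (z @ z') = pauli_op n p x z * pauli_op k B x' z'"
  unfolding pauli_op_def prod_lessThan_add using assms
  by (auto simp: nth_append intro!: arg_cong2[where f = "(*)"] prod.cong)

lemma chi_expectation_append:
  assumes p: "length p = 4 * m" and B: "length B = 4"
  shows "chi_expectation (4 * m + 4) \<gamma> (p @ B) = chi_expectation (4 * m) \<gamma> p * chi_expectation 4 \<gamma> B"
proof -
  have "chi_expectation (4 * m + 4) \<gamma> (p @ B)
      = (\<Sum>x\<in>bitstrings (4 * m). \<Sum>x'\<in>bitstrings 4. \<Sum>z\<in>bitstrings (4 * m). \<Sum>z'\<in>bitstrings 4.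
          (chi (4 * m) \<gamma> x * pauli_op (4 * m) p x z * chi (4 * m) \<gamma> z)
          * (chi 4 \<gamma> x' * pauli_op 4 B x' z' * chi 4 \<gamma> z'))"
    unfolding chi_expectation_def sum_bitstrings_add
  proof (intro sum.cong refl)
    fix x x' z z'
    assume "x \<in> bitstrings (4 * m)" "x' \<in> bitstrings 4" "z \<in> bitstrings (4 * m)" "z' \<in> bitstrings 4"
    then have l: "length x = 4 * m" "length x' = 4" "length z = 4 * m" "length z' = 4"
      by (auto simp: bitstrings_def)
    show "chi (4 * m + 4) \<gamma> (x @ x') * pauli_op (4 * m + 4) (p @ B) (x @ x') (z @ z')
          * chi (4 * m + 4) \<gamma> (z @ z')
        = (chi (4 * m) \<gamma> x * pauli_op (4 * m) p x z * chi (4 * m) \<gamma> z)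
          * (chi 4 \<gamma> x' * pauli_op 4 B x' z' * chi 4 \<gamma> z')"
      unfolding chi_append[OF l(1,2)] chi_append[OF l(3,4)] pauli_op_append[OF p l(1,3) B l(2,4)]
      by (simp add: mult_ac)
  qed
  also have "\<dots> = chi_expectation (4 * m) \<gamma> p * chi_expectation 4 \<gamma> B"
    unfolding chi_expectation_def by (simp add: sum_product)
  finally show ?thesis .
qed

lemma chi_expectation_Nil: "chi_expectation 0 \<gamma> [] = 1"
  by (simp add: chi_expectation_def bitstrings_0 chi_def pauli_op_def)

lemma chi_4:
  assumes "x \<in> bitstrings 4"
  shows "chi 4 \<gamma> x =
    (if x = replicate 4 False then complex_of_real (cos (\<gamma> / 4))
     else if x = replicate 4 True then complex_of_real (sin (\<gamma> / 4)) else 0)"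
proof -
  obtain a b c d where "x = [a, b, c, d]"
    using assms by (auto simp: bitstrings_def length_Suc_conv numeral_eq_Suc)
  moreover have "replicate 4 v = [v, v, v, v]" for v :: bool
    by (simp add: numeral_eq_Suc)
  ultimately show ?thesis
    by (auto simp: chi_def all_less_4)
qed

lemma sum_bitstrings_4:
  assumes "\<And>x. x \<in> bitstrings 4 \<Longrightarrow> x \<noteq> replicate 4 False \<Longrightarrow> x \<noteq> replicate 4 True \<Longrightarrow> g x = 0"
  shows "(\<Sum>x\<in>bitstrings 4. g x) = g (replicate 4 False) + g (replicate 4 True)"
proof -
  have "(\<Sum>x\<in>bitstrings 4. g x) = (\<Sum>x\<in>{replicate 4 False, replicate 4 True}. g x)"
    using assms by (intro sum.mono_neutral_right finite_bitstrings) (auto simp: bitstrings_def)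
  then show ?thesis
    by (simp add: numeral_eq_Suc)
qed

definition ghz_amplitude :: "real \<Rightarrow> bool \<Rightarrow> complex" where
  "ghz_amplitude \<gamma> a = complex_of_real (if a then sin (\<gamma> / 4) else cos (\<gamma> / 4))"

lemma chi_expectation_4:
  "chi_expectation 4 \<gamma> B = (\<Sum>a\<in>UNIV. \<Sum>b\<in>UNIV.
     ghz_amplitude \<gamma> a * ghz_amplitude \<gamma> b * (\<Prod>k<4. sigma (B ! k) a b))"
proof -
  have "chi 4 \<gamma> (replicate 4 a) = ghz_amplitude \<gamma> a" for a
    by (simp add: chi_4 bitstrings_def ghz_amplitude_def)
  moreover have "pauli_op 4 B (replicate 4 a) (replicate 4 b) = (\<Prod>k<4. sigma (B ! k) a b)" for a b
    by (simp add: pauli_op_def)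
  ultimately show ?thesis
    unfolding chi_expectation_def
    by (simp add: sum_bitstrings_4 chi_4 UNIV_bool ghz_amplitude_def algebra_simps)
qed

lemma chi_expectation_4_eq_0:
  assumes B: "B \<in> pauli_strings 4" and odd: "odd (\<Sum>j<4. of_bool (pauli_x (B ! j)) :: nat)"
  shows "chi_expectation 4 \<gamma> B = 0"
proof -
  have "\<exists>j<4. pauli_x (B ! j)"
  proof (rule ccontr)
    assume "\<not> ?thesis"
    then have "(\<Sum>j<4. of_bool (pauli_x (B ! j)) :: nat) = 0"
      by simp
    with odd show False by simp
  qed
  then obtain j where j: "j < 4" "pauli_x (B ! j)"
    by blast
  have "\<exists>j'<4. \<not> pauli_x (B ! j')"
  proof (rule ccontr)
    assume "\<not> ?thesis"
    then have "(\<Sum>j<4. of_bool (pauli_x (B ! j)) :: nat) = 4"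
      by simp
    with odd show False by simp
  qed
  then obtain j' where j': "j' < 4" "\<not> pauli_x (B ! j')"
    by blast
  have "(\<Prod>k<4. sigma (B ! k) a b) = 0" for a b
  proof (cases "a = b")
    case True
    with j show ?thesis
      by (intro prod_zero bexI[of _ j]) (auto intro: sigma_diagonal_eq_0)
  next
    case False
    with j' pauli_strings_nth_less[OF B] show ?thesis
      by (intro prod_zero bexI[of _ j']) (auto intro: sigma_off_diagonal_eq_0)
  qed
  then show ?thesis
    unfolding chi_expectation_4 by (simp only: mult_zero_right sum.neutral_const)
qed

lemma jw_degree_append:
  assumes B: "length B = k" and even: "even (\<Sum>j<k. of_bool (pauli_x (B ! j)) :: nat)"
  shows "jw_degree (p @ B) = jw_degree p + jw_degree B"
proof -
  let ?n = "length p"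
  have head: "jw_tail_parity (p @ B) q = jw_tail_parity p q" if "q < ?n" for q
  proof -
    have "(\<Sum>q'<?n + k. of_bool (q < q' \<and> pauli_x ((p @ B) ! q')) :: nat)
       = (\<Sum>q'<?n. of_bool (q < q' \<and> pauli_x (p ! q'))) + (\<Sum>j<k. of_bool (pauli_x (B ! j)))"
      unfolding sum_lessThan_add using that by (auto simp: nth_append intro!: sum.cong)
    then show ?thesis
      unfolding jw_tail_parity_def using B even by simp
  qed
  have tail: "jw_tail_parity (p @ B) (?n + j) = jw_tail_parity B j" for j
  proof -
    have "(\<Sum>q'<?n + k. of_bool (?n + j < q' \<and> pauli_x ((p @ B) ! q')) :: nat)
       = (\<Sum>j'<k. of_bool (j < j' \<and> pauli_x (B ! j')))"
      unfolding sum_lessThan_add by (auto simp: nth_append intro!: sum.cong)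
    then show ?thesis
      unfolding jw_tail_parity_def using B by simp
  qed
  show ?thesis
    unfolding jw_degree_def length_append B sum_lessThan_add
    by (auto simp: nth_append head tail B intro!: sum.cong arg_cong2[where f = "(+)"])
qed

lemma sum_compositions_5:
  fixes m :: nat
  shows "(\<Sum>(i, j, l, r, s)\<in>{(i, j, l, r, s). i + j + l + r + s = m}. f i j l r s)
   = (\<Sum>i\<le>m. \<Sum>j\<le>m - i. \<Sum>l\<le>m - i - j. \<Sum>r\<le>m - i - j - l. f i j l r (m - i - j - l - r))"
proof -
  let ?g = "\<lambda>(i, j, l, r). (i, j, l, r, m - i - j - l - r)"
  have "{(i, j, l, r, s). i + j + l + r + s = m}
      = ?g ` (SIGMA i:{..m}. SIGMA j:{..m - i}. SIGMA l:{..m - i - j}. {..m - i - j - l})"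
    by (auto simp: image_iff)
  moreover have "inj_on ?g A" for A
    by (auto simp: inj_on_def)
  ultimately show ?thesis
    by (simp add: sum.reindex sum.Sigma split_def)
qed

definition multinomial_coeff_5 :: "nat \<Rightarrow> nat \<Rightarrow> nat \<Rightarrow> nat \<Rightarrow> nat \<Rightarrow> nat" where
  "multinomial_coeff_5 m i j l r =
     (m choose i) * ((m - i) choose j) * ((m - i - j) choose l) * ((m - i - j - l) choose r)"

lemma multinomial_5:
  fixes x0 x1 x2 x3 x4 :: "'a::comm_semiring_1"
  shows "(x0 + x1 + x2 + x3 + x4) ^ m
    = (\<Sum>(i, j, l, r, s)\<in>{(i, j, l, r, s). i + j + l + r + s = m}.
        of_nat (multinomial_coeff_5 m i j l r) * x0 ^ i * x1 ^ j * x2 ^ l * x3 ^ r * x4 ^ s)"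
proof -
  have "(x0 + x1 + x2 + x3 + x4) ^ m = (x0 + (x1 + (x2 + (x3 + x4)))) ^ m"
    by (simp add: add_ac)
  also have "\<dots> = (\<Sum>i\<le>m. of_nat (m choose i) * x0 ^ i * (\<Sum>j\<le>m - i. of_nat ((m - i) choose j) * x1 ^ j *
      (\<Sum>l\<le>m - i - j. of_nat ((m - i - j) choose l) * x2 ^ l * (\<Sum>r\<le>m - i - j - l.
        of_nat ((m - i - j - l) choose r) * x3 ^ r * x4 ^ (m - i - j - l - r)))))"
    by (simp only: binomial_ring atLeast0AtMost)
  also have "\<dots> = (\<Sum>(i, j, l, r, s)\<in>{(i, j, l, r, s). i + j + l + r + s = m}.
        of_nat (multinomial_coeff_5 m i j l r) * x0 ^ i * x1 ^ j * x2 ^ l * x3 ^ r * x4 ^ s)"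
    by (simp add: sum_compositions_5 sum_distrib_left multinomial_coeff_5_def mult_ac)
  finally show ?thesis .
qed

lemma of_nat_multinomial_coeff_5:
  assumes "i + j + l + r + s = m"
  shows "(of_nat (multinomial_coeff_5 m i j l r) :: 'a::field_char_0)
       = fact m / (fact i * fact j * fact l * fact r * fact s)"
proof -
  have "s = m - i - j - l - r" "i \<le> m" "j \<le> m - i" "l \<le> m - i - j" "r \<le> m - i - j - l"
    using assms by auto
  then show ?thesis
    by (simp add: multinomial_coeff_5_def binomial_fact field_simps)
qed

lemma coeff_even_monom_sum_power:
  fixes a b c d :: "'a::field_char_0"
  shows "coeff ((monom 1 0 + monom a 2 + monom b 4 + monom c 6 + monom d 8) ^ m) \<alpha>
    = (\<Sum>(i0, i2, i4, i6, i8)\<in>{(i0, i2, i4, i6, i8). i0 + i2 + i4 + i6 + i8 = m \<and> 2*i2 + 4*i4 + 6*i6 + 8*i8 = \<alpha>}.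
        fact m / (fact i0 * fact i2 * fact i4 * fact i6 * fact i8) * a ^ i2 * b ^ i4 * c ^ i6 * d ^ i8)"
proof -
  let ?T = "{(i0, i2, i4, i6, i8). i0 + i2 + i4 + i6 + i8 = m} :: (nat \<times> nat \<times> nat \<times> nat \<times> nat) set"
  have "finite ?T"
    by (rule finite_subset[of _ "{..m} \<times> {..m} \<times> {..m} \<times> {..m} \<times> {..m}"]) auto
  have "coeff ((monom 1 0 + monom a 2 + monom b 4 + monom c 6 + monom d 8) ^ m) \<alpha>
    = (\<Sum>(i0, i2, i4, i6, i8)\<in>?T. if 2*i2 + 4*i4 + 6*i6 + 8*i8 = \<alpha>
        then fact m / (fact i0 * fact i2 * fact i4 * fact i6 * fact i8) * a ^ i2 * b ^ i4 * c ^ i6 * d ^ i8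
        else 0)"
    unfolding multinomial_5 coeff_sum
    by (intro sum.cong refl)
      (auto simp: monom_power mult_monom of_nat_monom of_nat_multinomial_coeff_5 mult_ac)
  also have "\<dots> = (\<Sum>(i0, i2, i4, i6, i8)\<in>{(i0, i2, i4, i6, i8). i0 + i2 + i4 + i6 + i8 = m \<and> 2*i2 + 4*i4 + 6*i6 + 8*i8 = \<alpha>}.
        fact m / (fact i0 * fact i2 * fact i4 * fact i6 * fact i8) * a ^ i2 * b ^ i4 * c ^ i6 * d ^ i8)"
    using \<open>finite ?T\<close> by (simp add: sum.If_cases split_def Int_def conj_commute)
  finally show ?thesis .
qed

section \<open>The generating polynomial\<close>

definition majorana_spectrum_poly :: "real \<Rightarrow> nat \<Rightarrow> complex poly" where
  "majorana_spectrum_poly \<gamma> m =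
     (\<Sum>p\<in>pauli_strings (4 * m). monom ((chi_expectation (4 * m) \<gamma> p)\<^sup>2) (jw_degree p))"

lemma majorana_spectrum_poly_Suc:
  "majorana_spectrum_poly \<gamma> (Suc m) = majorana_spectrum_poly \<gamma> m * majorana_spectrum_poly \<gamma> 1"
proof -
  have "majorana_spectrum_poly \<gamma> (Suc m) = (\<Sum>p\<in>pauli_strings (4 * m). \<Sum>B\<in>pauli_strings 4.
      monom ((chi_expectation (4 * m + 4) \<gamma> (p @ B))\<^sup>2) (jw_degree (p @ B)))"
    unfolding majorana_spectrum_poly_def
    by (simp only: sum_pauli_strings_add mult_Suc_right add.commute[of 4 "4 * m"])
  also have "\<dots> = (\<Sum>p\<in>pauli_strings (4 * m). \<Sum>B\<in>pauli_strings 4.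
      monom ((chi_expectation (4 * m) \<gamma> p)\<^sup>2) (jw_degree p) * monom ((chi_expectation 4 \<gamma> B)\<^sup>2) (jw_degree B))"
  proof (intro sum.cong refl)
    fix p B assume p: "p \<in> pauli_strings (4 * m)" and B: "B \<in> pauli_strings 4"
    have E: "chi_expectation (4 * m + 4) \<gamma> (p @ B) = chi_expectation (4 * m) \<gamma> p * chi_expectation 4 \<gamma> B"
      by (rule chi_expectation_append[OF pauli_strings_length[OF p] pauli_strings_length[OF B]])
    show "monom ((chi_expectation (4 * m + 4) \<gamma> (p @ B))\<^sup>2) (jw_degree (p @ B))
        = monom ((chi_expectation (4 * m) \<gamma> p)\<^sup>2) (jw_degree p) * monom ((chi_expectation 4 \<gamma> B)\<^sup>2) (jw_degree B)"
    proof (cases "even (\<Sum>j<4. of_bool (pauli_x (B ! j)) :: nat)")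
      case True
      then have "jw_degree (p @ B) = jw_degree p + jw_degree B"
        by (rule jw_degree_append[OF pauli_strings_length[OF B]])
      then show ?thesis
        by (simp add: E mult_monom power_mult_distrib)
    next
      case False
      then show ?thesis
        by (simp add: E chi_expectation_4_eq_0[OF B])
    qed
  qed
  also have "\<dots> = majorana_spectrum_poly \<gamma> m * majorana_spectrum_poly \<gamma> 1"
    unfolding majorana_spectrum_poly_def by (simp add: sum_product)
  finally show ?thesis .
qed

lemma majorana_spectrum_poly_eq_power:
  "majorana_spectrum_poly \<gamma> m = majorana_spectrum_poly \<gamma> 1 ^ m"
proof (induction m)
  case 0
  then show ?case
    by (simp add: majorana_spectrum_poly_def pauli_strings_0 chi_expectation_Nil jw_degree_def)
next
  case (Suc m)
  then show ?case
    unfolding majorana_spectrum_poly_Suc[of \<gamma> m] by (simp add: mult.commute)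
qed

lemma coeff_majorana_spectrum_poly_1:
  fixes \<gamma> :: real and C S :: complex
  defines "C \<equiv> ghz_amplitude \<gamma> False" and "S \<equiv> ghz_amplitude \<gamma> True"
  shows "coeff (majorana_spectrum_poly \<gamma> 1) k =
      (if k = 0 then (C\<^sup>2 + S\<^sup>2)\<^sup>2 else 0) + (if k = 2 then 4 * (C\<^sup>2 - S\<^sup>2)\<^sup>2 else 0)
    + (if k = 4 then 6 * (C\<^sup>2 + S\<^sup>2)\<^sup>2 + 32 * C\<^sup>2 * S\<^sup>2 else 0)
    + (if k = 6 then 4 * (C\<^sup>2 - S\<^sup>2)\<^sup>2 else 0) + (if k = 8 then (C\<^sup>2 + S\<^sup>2)\<^sup>2 else 0)"
  unfolding majorana_spectrum_poly_def coeff_sum coeff_monom mult_1_right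
    sum_pauli_strings_4 chi_expectation_4 UNIV_bool C_def[symmetric] S_def[symmetric] prod_lessThan_4
  by (simp add: sum_lessThan_4 jw_degree_def jw_tail_parity_def pauli_x_def pauli_z_def
      sigma_def C_def[symmetric] S_def[symmetric])
    (auto simp: power2_eq_square algebra_simps)

definition ghz_block_poly :: "real \<Rightarrow> complex poly" where
  "ghz_block_poly \<gamma> = monom 1 0 + monom (of_real (N2 \<gamma>)) 2 + monom (of_real (N4 \<gamma>)) 4
     + monom (of_real (N6 \<gamma>)) 6 + monom (of_real N8) 8"

lemma majorana_spectrum_poly_1: "majorana_spectrum_poly \<gamma> 1 = ghz_block_poly \<gamma>"
proof (rule poly_eqI)
  fix k
  define C where "C = ghz_amplitude \<gamma> False"
  define S where "S = ghz_amplitude \<gamma> True"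
  have "C\<^sup>2 + S\<^sup>2 = 1"
    unfolding C_def S_def ghz_amplitude_def
    by (simp flip: of_real_power of_real_add)
  moreover have "C\<^sup>2 - S\<^sup>2 = of_real (cos (\<gamma> / 2))"
  proof -
    have "cos (\<gamma> / 2) = (cos (\<gamma> / 4))\<^sup>2 - (sin (\<gamma> / 4))\<^sup>2"
      using cos_double[of "\<gamma> / 4"] by simp
    then show ?thesis
      unfolding C_def S_def ghz_amplitude_def by simp
  qed
  moreover have "2 * C * S = of_real (sin (\<gamma> / 2))"
  proof -
    have "sin (\<gamma> / 2) = 2 * sin (\<gamma> / 4) * cos (\<gamma> / 4)"
      using sin_double[of "\<gamma> / 4"] by simp
    then show ?thesis
      unfolding C_def S_def ghz_amplitude_def by simp
  qed
  ultimately have "of_real (N2 \<gamma>) = 4 * (C\<^sup>2 - S\<^sup>2)\<^sup>2" "of_real (N6 \<gamma>) = 4 * (C\<^sup>2 - S\<^sup>2)\<^sup>2"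
    and "of_real (N4 \<gamma>) = 6 * (C\<^sup>2 + S\<^sup>2)\<^sup>2 + 32 * C\<^sup>2 * S\<^sup>2"
    by (simp_all add: N2_def N4_def N6_def power_mult_distrib flip: \<open>2 * C * S = _\<close>)
  with \<open>C\<^sup>2 + S\<^sup>2 = 1\<close> show "coeff (majorana_spectrum_poly \<gamma> 1) k = coeff (ghz_block_poly \<gamma>) k"
    unfolding coeff_majorana_spectrum_poly_1 C_def[symmetric] S_def[symmetric]
    by (simp add: ghz_block_poly_def N8_def)
qed

lemma P_alpha_rho_gamma_eq_coeff:
  assumes "n = 4 * m"
  shows "P_alpha n \<alpha> (rho_gamma n \<gamma>) = coeff (majorana_spectrum_poly \<gamma> m) \<alpha> / 2 ^ n"
proof -
  define c where "c = complex_of_real (sqrt (2 ^ n))"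
  have "c\<^sup>2 = complex_of_real ((sqrt (2 ^ n))\<^sup>2)"
    unfolding c_def by (simp only: of_real_power)
  then have "c\<^sup>2 = 2 ^ n"
    by simp
  have "P_alpha n \<alpha> (rho_gamma n \<gamma>) = (\<Sum>p\<in>{p\<in>pauli_strings n. jw_degree p = \<alpha>}. (chi_expectation n \<gamma> p / c)\<^sup>2)"
    unfolding P_alpha_def c_def[symmetric] trace_pauli_op_rho_gamma
    by (intro sum.cong) (auto simp: in_L_pauli_op_iff)
  also have "\<dots> = (\<Sum>p\<in>pauli_strings n. if jw_degree p = \<alpha> then (chi_expectation n \<gamma> p)\<^sup>2 else 0) / 2 ^ n"
    by (simp add: sum.inter_filter power_divide \<open>c\<^sup>2 = 2 ^ n\<close> sum_divide_distrib if_distrib[of "\<lambda>x. x / 2 ^ n"] cong: if_cong)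
  also have "\<dots> = coeff (majorana_spectrum_poly \<gamma> m) \<alpha> / 2 ^ n"
    unfolding majorana_spectrum_poly_def coeff_sum assms by simp
  finally show ?thesis .
qed

theorem mainTheorem10:
  fixes n :: nat and \<gamma> :: real and \<alpha> :: nat
  assumes "n > 0" and "4 dvd n" and "\<alpha> \<le> 2 * n"
  shows "P_alpha n \<alpha> (rho_gamma n \<gamma>) = complex_of_real
          (1 / 2 ^ n * (\<Sum>(i0, i2, i4, i6, i8)\<in>{(i0::nat, i2::nat, i4::nat, i6::nat, i8::nat).
               i0 + i2 + i4 + i6 + i8 = n div 4 \<and> 2*i2 + 4*i4 + 6*i6 + 8*i8 = \<alpha>}.
             fact (n div 4) / (fact i0 * fact i2 * fact i4 * fact i6 * fact i8)
             * N2 \<gamma> ^ i2 * N4 \<gamma> ^ i4 * N6 \<gamma> ^ i6 * N8 ^ i8))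
       \<and> (odd \<alpha> \<longrightarrow> P_alpha n \<alpha> (rho_gamma n \<gamma>) = 0)"
proof -
  define T where "T = {(i0::nat, i2::nat, i4::nat, i6::nat, i8::nat).
    i0 + i2 + i4 + i6 + i8 = n div 4 \<and> 2*i2 + 4*i4 + 6*i6 + 8*i8 = \<alpha>}"
  have "odd \<alpha> \<Longrightarrow> T = {}"
    unfolding T_def by auto
  have "P_alpha n \<alpha> (rho_gamma n \<gamma>) = coeff (majorana_spectrum_poly \<gamma> (n div 4)) \<alpha> / 2 ^ n"
    using \<open>4 dvd n\<close> by (intro P_alpha_rho_gamma_eq_coeff) simp
  also have "\<dots> = coeff (ghz_block_poly \<gamma> ^ (n div 4)) \<alpha> / 2 ^ n"
    by (simp only: majorana_spectrum_poly_eq_power[of \<gamma> "n div 4"] majorana_spectrum_poly_1)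
  also have "\<dots> = complex_of_real (1 / 2 ^ n * (\<Sum>(i0, i2, i4, i6, i8)\<in>T.
      fact (n div 4) / (fact i0 * fact i2 * fact i4 * fact i6 * fact i8)
      * N2 \<gamma> ^ i2 * N4 \<gamma> ^ i4 * N6 \<gamma> ^ i6 * N8 ^ i8))"
    unfolding ghz_block_poly_def coeff_even_monom_sum_power T_def
    by (simp add: of_real_sum split_def)
  finally show ?thesis
    using \<open>odd \<alpha> \<Longrightarrow> T = {}\<close> unfolding T_def[symmetric] by auto
qed

end
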